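(* Let $b_x,b_y,u_x,u_y,K$ be positive constants with $u_y>u_x$ and $b_x\geq b_y$, let $h>0$, and consider the discrete system \[ X_{n+1}=\frac{X_n(1+hb_x)}{1+h\left(\frac{b_x}{K}X_n+\frac{b_x}{K}Y_n+u_x\right)},\qquad Y_{n+1}=\frac{Y_n(1+hb_y)}{1+h\left(\frac{b_y}{K}X_n+\frac{b_y}{K}Y_n+u_y\right)} . \] Let $\bar X=K(1-u_x/b_x)$ and $\bar Y=K(1-u_y/b_y)$. Then, for every $h>0$: (i) the system is locally asymptotically stable around $E_0^V=(0,0)$ if $b_x<u_x$ and $b_y<u_y$; (ii) the system is locally asymptotically stable around $E_1^V=(\bar X,0)$ if $b_x>u_x$ and $\frac{b_y}{u_y}<\frac{b_x}{u_x}$; (iii) the fixed point $E_2^V=(0,\bar Y)$ is always unstable.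
   Context: This is a nonstandard finite-difference discretization (step size $h$) of a host–parasite model with perfect vertical transmission and no horizontal transmission; $X,Y$ are uninfected and infected host densities, $b_x,b_y$ birth rates, $u_x,u_y$ death rates, $K$ carrying capacity. The paper assumes throughout that $u_y>u_x$ and $b_x\geq b_y$. A fixed point of the map is called (locally asymptotically) stable if both eigenvalues of the Jacobian of the map at the fixed point have modulus strictly less than $1$, and unstable otherwise. *)

theory Defs
  imports "HOL-Analysis.Analysis"
begin

text \<open>The nonstandard finite-difference host-parasite map, on the plane real^2
  (component 1 = X, uninfected hosts; component 2 = Y, infected hosts).\<close>
definition hp_map :: "real \<Rightarrow> real \<Rightarrow> real \<Rightarrow> real \<Rightarrow> real \<Rightarrow> real \<Rightarrow> real^2 \<Rightarrow> real^2" where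
  "hp_map b_x b_y u_x u_y K h v =
     vector [ v$1 * (1 + h*b_x) / (1 + h*(b_x/K * v$1 + b_x/K * v$2 + u_x)),
              v$2 * (1 + h*b_y) / (1 + h*(b_y/K * v$1 + b_y/K * v$2 + u_y)) ]"

definition jacobian :: "(real^'n \<Rightarrow> real^'m) \<Rightarrow> real^'n \<Rightarrow> real^'n^'m" where
  "jacobian f p = matrix (frechet_derivative f (at p))"

definition eigenvalue :: "real^'n^'n \<Rightarrow> complex \<Rightarrow> bool" where
  "eigenvalue A lam \<longleftrightarrow> det ((\<chi> i j. complex_of_real (A $ i $ j)) - mat lam) = 0"

definition loc_stable :: "(real^'n \<Rightarrow> real^'n) \<Rightarrow> real^'n \<Rightarrow> bool" where
  "loc_stable f p \<longleftrightarrow> f p = p \<and> f differentiable (at p) \<and>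
     (\<forall>lam. eigenvalue (jacobian f p) lam \<longrightarrow> cmod lam < 1)"

text \<open>Unstable fixed point (the paper: "unstable otherwise"): a fixed point which is
  not locally asymptotically stable.\<close>
definition loc_unstable :: "(real^'n \<Rightarrow> real^'n) \<Rightarrow> real^'n \<Rightarrow> bool" where
  "loc_unstable f p \<longleftrightarrow> f p = p \<and> \<not> loc_stable f p"

end

theory Submission
  imports Defs
begin

text \<open>
  The map is of Leslie--Gower type, \<open>v\<^sub>i \<mapsto> a\<^sub>i v\<^sub>i / (d\<^sub>i + c\<^sub>i (v\<^sub>1 + v\<^sub>2))\<close>, with
  \<open>a = 1 + h b\<close>, \<open>c = h b / K\<close>, \<open>d = 1 + h u\<close>. All three equilibria lie on a coordinate
  axis, where the Jacobian is triangular, so stability is decided by its diagonal entries,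
  \<open>a\<^sub>i - c\<^sub>i p\<^sub>i\<close> over the \<open>i\<close>-th denominator. For this map they are quotients \<open>(1 + h s) / (1 + h t)\<close>, whose
  modulus is below 1 exactly when \<open>s < t\<close>, whatever \<open>h > 0\<close> is. At \<open>(0, Y)\<close> either
  \<open>b\<^sub>y \<le> u\<^sub>y\<close> and the infected entry \<open>(1 + h u\<^sub>y) / (1 + h b\<^sub>y)\<close> is at least 1, or
  \<open>b\<^sub>y > u\<^sub>y\<close> and, because \<open>b\<^sub>x \<ge> b\<^sub>y\<close> and \<open>u\<^sub>y > u\<^sub>x\<close>, the uninfected entry exceeds 1;
  should the uninfected denominator vanish there, the map is not even continuous.
\<close>

lemma has_derivative_vec_lambda:
  fixes f :: "'a::real_normed_vector \<Rightarrow> 'n::finite \<Rightarrow> real"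
  assumes "\<And>i. ((\<lambda>x. f x i) has_derivative (\<lambda>h. f' h i)) F"
  shows "((\<lambda>x. \<chi> i. f x i) has_derivative (\<lambda>h. \<chi> i. f' h i)) F"
proof -
  have "(\<lambda>x. \<chi> i. f x i) = (\<lambda>x. \<Sum>i\<in>UNIV. f x i *\<^sub>R axis i 1)"
       "(\<lambda>h. \<chi> i. f' h i) = (\<lambda>h. \<Sum>i\<in>UNIV. f' h i *\<^sub>R axis i 1)"
    by (simp_all add: fun_eq_iff vec_eq_iff axis_def if_distrib cong: if_cong)
  then show ?thesis
    by (simp only:) (intro has_derivative_sum has_derivative_scaleR_left assms)
qed

lemma eigenvalue_triangular_2:
  fixes A :: "real^2^2"
  assumes "A$1$2 = 0 \<or> A$2$1 = 0"
  shows "eigenvalue A lam \<longleftrightarrow> lam = of_real (A$1$1) \<or> lam = of_real (A$2$2)"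
  using assms by (auto simp: eigenvalue_def det_2 mat_def)

lemma loc_stable_triangular_iff:
  fixes f :: "real^2 \<Rightarrow> real^2"
  assumes "f p = p" "f differentiable (at p)"
    and "jacobian f p $1$2 = 0 \<or> jacobian f p $2$1 = 0"
  shows "loc_stable f p \<longleftrightarrow> \<bar>jacobian f p $1$1\<bar> < 1 \<and> \<bar>jacobian f p $2$2\<bar> < 1"
  using assms by (auto simp: loc_stable_def eigenvalue_triangular_2)

lemma loc_stable_imp_isCont: "loc_stable f p \<Longrightarrow> isCont f p"
  by (simp add: loc_stable_def differentiable_imp_continuous_within)

definition leslie_gower_denom :: "real^2 \<Rightarrow> real^2 \<Rightarrow> real^2 \<Rightarrow> 2 \<Rightarrow> real" where
  "leslie_gower_denom c d v i = d$i + c$i * (v$1 + v$2)"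

definition leslie_gower_map :: "real^2 \<Rightarrow> real^2 \<Rightarrow> real^2 \<Rightarrow> real^2 \<Rightarrow> real^2" where
  "leslie_gower_map a c d v = (\<chi> i. v$i * a$i / leslie_gower_denom c d v i)"

lemma mult_divide_eq_self_iff:
  fixes x a D :: real
  shows "x * a / D = x \<longleftrightarrow> x = 0 \<or> (D = a \<and> a \<noteq> 0)"
  by (cases "D = 0") (auto simp: field_simps)

lemma leslie_gower_map_fixed_iff:
  "leslie_gower_map a c d p = p \<longleftrightarrow>
     (\<forall>i. p$i = 0 \<or> (leslie_gower_denom c d p i = a$i \<and> a$i \<noteq> 0))"
  by (simp add: leslie_gower_map_def vec_eq_iff mult_divide_eq_self_iff)

lemma leslie_gower_map_has_derivative:
  assumes "\<forall>i. leslie_gower_denom c d p i \<noteq> 0"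
  shows "(leslie_gower_map a c d has_derivative
     (\<lambda>v. \<chi> i. a$i / leslie_gower_denom c d p i * v$i
        - p$i * a$i * c$i / (leslie_gower_denom c d p i)\<^sup>2 * (v$1 + v$2))) (at p)"
  unfolding leslie_gower_map_def
proof (rule has_derivative_vec_lambda)
  fix i
  have "((\<lambda>v. v$i * a$i / leslie_gower_denom c d v i) has_derivative
      (\<lambda>v. (v$i * a$i * leslie_gower_denom c d p i - p$i * a$i * (c$i * (v$1 + v$2)))
         / (leslie_gower_denom c d p i * leslie_gower_denom c d p i))) (at p)"
    using assms bounded_linear_vec_nth[THEN bounded_linear_imp_has_derivative]
    by (auto intro!: derivative_eq_intros simp: leslie_gower_denom_def)
  then show "((\<lambda>v. v$i * a$i / leslie_gower_denom c d v i) has_derivative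
      (\<lambda>v. a$i / leslie_gower_denom c d p i * v$i
        - p$i * a$i * c$i / (leslie_gower_denom c d p i)\<^sup>2 * (v$1 + v$2))) (at p)"
    using assms by (simp add: field_simps power2_eq_square)
qed

lemma jacobian_leslie_gower_map:
  assumes "\<forall>i. leslie_gower_denom c d p i \<noteq> 0"
  shows "leslie_gower_map a c d differentiable (at p)"
    and "jacobian (leslie_gower_map a c d) p $ i $ j =
      (if i = j then a$i / leslie_gower_denom c d p i else 0)
      - p$i * a$i * c$i / (leslie_gower_denom c d p i)\<^sup>2"
proof -
  note deriv = leslie_gower_map_has_derivative[OF assms, of a]
  then show "leslie_gower_map a c d differentiable (at p)"
    by (auto simp: differentiable_def)
  show "jacobian (leslie_gower_map a c d) p $ i $ j =
      (if i = j then a$i / leslie_gower_denom c d p i else 0)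
      - p$i * a$i * c$i / (leslie_gower_denom c d p i)\<^sup>2"
    using exhaust_2[of j]
    by (auto simp: jacobian_def frechet_derivative_at[OF deriv, symmetric] matrix_def axis_def)
qed

text \<open>At a fixed point each coordinate is zero or has denominator \<open>a$i\<close>; in both cases the
  diagonal Jacobian entry collapses to the same quotient.\<close>
lemma loc_stable_leslie_gower_map_iff:
  assumes fixed: "leslie_gower_map a c d p = p"
    and axis: "p$1 = 0 \<or> p$2 = 0"
    and denom: "\<forall>i. leslie_gower_denom c d p i \<noteq> 0"
  shows "loc_stable (leslie_gower_map a c d) p \<longleftrightarrow>
    (\<forall>i. \<bar>(a$i - c$i * p$i) / leslie_gower_denom c d p i\<bar> < 1)"
proof -
  have diag: "jacobian (leslie_gower_map a c d) p $ i $ i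
      = (a$i - c$i * p$i) / leslie_gower_denom c d p i" for i
    using fixed[unfolded leslie_gower_map_fixed_iff, rule_format, of i] denom
    by (auto simp: jacobian_leslie_gower_map(2)[OF denom] field_simps power2_eq_square)
  have "jacobian (leslie_gower_map a c d) p $1$2 = 0 \<or> jacobian (leslie_gower_map a c d) p $2$1 = 0"
    using axis by (auto simp: jacobian_leslie_gower_map(2)[OF denom])
  then show ?thesis
    by (simp only: loc_stable_triangular_iff[OF fixed jacobian_leslie_gower_map(1)[OF denom]]
        diag forall_2)
qed

lemma leslie_gower_map_not_isCont:
  assumes "p$i = 0" "leslie_gower_denom c d p i = 0" "a$i \<noteq> 0" "c$i \<noteq> 0"
  shows "\<not> isCont (leslie_gower_map a c d) p"
proof
  assume cont: "isCont (leslie_gower_map a c d) p"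
  have "((\<lambda>t. p + t *\<^sub>R axis i 1) \<longlongrightarrow> p) (at (0::real))"
    by (auto intro!: tendsto_eq_intros)
  then have "((\<lambda>t. leslie_gower_map a c d (p + t *\<^sub>R axis i 1) $ i)
      \<longlongrightarrow> leslie_gower_map a c d p $ i) (at 0)"
    by (intro tendsto_vec_nth isCont_tendsto_compose[OF cont])
  then have "((\<lambda>t. leslie_gower_map a c d (p + t *\<^sub>R axis i 1) $ i) \<longlongrightarrow> 0) (at 0)"
    using assms(1) by (simp add: leslie_gower_map_def)
  moreover have "\<forall>\<^sub>F t in at 0. leslie_gower_map a c d (p + t *\<^sub>R axis i 1) $ i = a$i / c$i"
  proof (rule eventually_at_topological[THEN iffD2], intro exI[of _ UNIV] conjI ballI impI)
    fix t :: real
    assume "t \<noteq> 0"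
    have "leslie_gower_denom c d (p + t *\<^sub>R axis i 1) i = c$i * t"
      using assms(2) exhaust_2[of i] by (auto simp: leslie_gower_denom_def axis_def algebra_simps)
    then show "leslie_gower_map a c d (p + t *\<^sub>R axis i 1) $ i = a$i / c$i"
      using assms(1) \<open>t \<noteq> 0\<close> by (simp add: leslie_gower_map_def axis_def)
  qed auto
  ultimately have "((\<lambda>t. a$i / c$i) \<longlongrightarrow> 0) (at (0::real))"
    by (rule Lim_transform_eventually)
  then show False
    using assms(3,4) LIM_const_eq by fastforce
qed

lemma hp_map_eq_leslie_gower_map:
  "hp_map b_x b_y u_x u_y K h = leslie_gower_map
     (vector [1 + h*b_x, 1 + h*b_y]) (vector [h*b_x/K, h*b_y/K]) (vector [1 + h*u_x, 1 + h*u_y])"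
  by (simp add: fun_eq_iff vec_eq_iff forall_2 hp_map_def leslie_gower_map_def
      leslie_gower_denom_def algebra_simps)

lemma nsfd_ratio_less_one:
  fixes h s t :: real
  assumes "0 < h" "0 \<le> s" "s < t"
  shows "\<bar>(1 + h * s) / (1 + h * t)\<bar> < 1"
proof -
  have "h * s < h * t" "0 \<le> h * s"
    using assms by simp_all
  then show ?thesis
    by (simp add: divide_simps)
qed

lemma nsfd_ratio_ge_one:
  fixes h s t :: real
  assumes "0 \<le> h" "0 \<le> s" "s \<le> t"
  shows "1 \<le> \<bar>(1 + h * t) / (1 + h * s)\<bar>"
proof -
  have "h * s \<le> h * t" "0 \<le> h * s"
    using assms by (simp_all add: mult_left_mono)
  then show ?thesis
    by (simp add: divide_simps)
qed

lemma loc_stable_hp_map_extinction: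
  assumes "0 < h" "0 \<le> b_x" "b_x < u_x" "0 \<le> b_y" "b_y < u_y"
  shows "loc_stable (hp_map b_x b_y u_x u_y K h) (vector [0, 0])"
proof -
  have "0 < 1 + h*u_x" "0 < 1 + h*u_y"
    using assms by (simp_all add: add_pos_nonneg)
  then show ?thesis
    unfolding hp_map_eq_leslie_gower_map
    using assms
    by (subst loc_stable_leslie_gower_map_iff)
      (simp_all add: leslie_gower_map_fixed_iff leslie_gower_denom_def forall_2 nsfd_ratio_less_one)
qed

lemma loc_stable_hp_map_disease_free:
  assumes "0 < h" "0 < u_x" "u_x < b_x" "0 \<le> b_y" "0 < u_y" "b_y / u_y < b_x / u_x" "K \<noteq> 0"
  shows "loc_stable (hp_map b_x b_y u_x u_y K h) (vector [K * (1 - u_x / b_x), 0])"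
proof -
  define a c d :: "real^2" where "a = vector [1 + h*b_x, 1 + h*b_y]" and "c = vector [h*b_x/K, h*b_y/K]"
    and "d = vector [1 + h*u_x, 1 + h*u_y]"
  let ?p = "vector [K * (1 - u_x / b_x), 0] :: real^2"
  have D1: "leslie_gower_denom c d ?p 1 = 1 + h*b_x"
    and D2: "leslie_gower_denom c d ?p 2 = 1 + h*(u_y + b_y * (1 - u_x / b_x))"
    and N1: "a$1 - c$1 * (K * (1 - u_x / b_x)) = 1 + h*u_x"
    and A2: "a$2 = 1 + h*b_y"
    using assms by (simp_all add: a_def c_def d_def leslie_gower_denom_def field_simps)
  have "0 < 1 + h*b_x"
    using assms by (simp add: add_pos_pos)
  then have fixed: "leslie_gower_map a c d ?p = ?p"
    by (simp add: leslie_gower_map_fixed_iff forall_2 D1 a_def)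
  have "b_y * u_x / b_x < u_y"
    using assms by (simp add: field_simps)
  then have "b_y < u_y + b_y * (1 - u_x / b_x)"
    by (simp add: algebra_simps)
  moreover have "0 < 1 + h*(u_y + b_y * (1 - u_x / b_x))"
    using calculation assms by (simp add: add_pos_pos)
  ultimately show ?thesis
    unfolding hp_map_eq_leslie_gower_map a_def[symmetric] c_def[symmetric] d_def[symmetric]
    using assms \<open>0 < 1 + h*b_x\<close>
    by (subst loc_stable_leslie_gower_map_iff[OF fixed])
      (simp_all add: forall_2 D1 D2 N1 A2 nsfd_ratio_less_one)
qed

lemma loc_unstable_hp_map_infected_only:
  assumes "0 < h" "0 < b_x" "0 < b_y" "0 \<le> u_x" "u_x < u_y" "b_y \<le> b_x" "K \<noteq> 0"
  shows "loc_unstable (hp_map b_x b_y u_x u_y K h) (vector [0, K * (1 - u_y / b_y)])"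
proof -
  define a c d :: "real^2" where "a = vector [1 + h*b_x, 1 + h*b_y]" and "c = vector [h*b_x/K, h*b_y/K]"
    and "d = vector [1 + h*u_x, 1 + h*u_y]"
  let ?p = "vector [0, K * (1 - u_y / b_y)] :: real^2"
  have D1: "leslie_gower_denom c d ?p 1 = 1 + h*(u_x + b_x * (1 - u_y / b_y))"
    and D2: "leslie_gower_denom c d ?p 2 = 1 + h*b_y"
    and N2: "1 + h*b_y - c$2 * (K * (1 - u_y / b_y)) = 1 + h*u_y"
    and A: "a$1 = 1 + h*b_x" "a$2 = 1 + h*b_y"
    and C1: "c$1 = h*b_x/K"
    using assms by (simp_all add: a_def c_def d_def leslie_gower_denom_def field_simps)
  have "0 < 1 + h*b_x" "0 < 1 + h*b_y"
    using assms by (simp_all add: add_pos_pos)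
  then have fixed: "leslie_gower_map a c d ?p = ?p"
    by (simp add: leslie_gower_map_fixed_iff forall_2 D2 A)
  have "\<not> loc_stable (leslie_gower_map a c d) ?p"
  proof (cases "1 + h*(u_x + b_x * (1 - u_y / b_y)) = 0")
    case True
    then have "\<not> isCont (leslie_gower_map a c d) ?p"
      using assms \<open>0 < 1 + h*b_x\<close>
      by (intro leslie_gower_map_not_isCont[of _ 1]) (simp_all add: D1 A C1)
    then show ?thesis
      using loc_stable_imp_isCont by blast
  next
    case False
    then have stable_iff: "loc_stable (leslie_gower_map a c d) ?p \<longleftrightarrow>
        \<bar>(1 + h*b_x) / (1 + h*(u_x + b_x * (1 - u_y / b_y)))\<bar> < 1
        \<and> \<bar>(1 + h*u_y) / (1 + h*b_y)\<bar> < 1"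
      using \<open>0 < 1 + h*b_y\<close>
      by (subst loc_stable_leslie_gower_map_iff[OF fixed]) (simp_all add: forall_2 D1 D2 N2 A)
    show ?thesis
    proof (cases "b_y \<le> u_y")
      case True
      then show ?thesis
        using stable_iff nsfd_ratio_ge_one[of h b_y u_y] assms by simp
    next
      case False
      then have "0 \<le> b_x * (1 - u_y / b_y)"
        using assms by (intro mult_nonneg_nonneg) simp_all
      then have "0 \<le> u_x + b_x * (1 - u_y / b_y)"
        using assms by simp
      moreover have "u_y \<le> b_x * u_y / b_y"
        using assms by (simp add: field_simps mult_right_mono)
      then have "u_x + b_x * (1 - u_y / b_y) \<le> b_x"
        using assms by (simp add: algebra_simps)
      ultimately show ?thesis
        using stable_iff nsfd_ratio_ge_one[of h "u_x + b_x * (1 - u_y / b_y)" b_x] assms by simp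
    qed
  qed
  then show ?thesis
    unfolding loc_unstable_def hp_map_eq_leslie_gower_map a_def[symmetric] c_def[symmetric]
      d_def[symmetric]
    using fixed by simp
qed

theorem theorem6:
  fixes b_x b_y u_x u_y K h :: real
  assumes pos: "b_x > 0" "b_y > 0" "u_x > 0" "u_y > 0" "K > 0"
    and "u_y > u_x" and "b_x \<ge> b_y" and "h > 0"
  shows "(b_x < u_x \<and> b_y < u_y \<longrightarrow> loc_stable (hp_map b_x b_y u_x u_y K h) (vector [0, 0]))
       \<and> (b_x > u_x \<and> b_y / u_y < b_x / u_x \<longrightarrow>
            loc_stable (hp_map b_x b_y u_x u_y K h) (vector [K * (1 - u_x / b_x), 0]))
       \<and> loc_unstable (hp_map b_x b_y u_x u_y K h) (vector [0, K * (1 - u_y / b_y)])"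
  using assms
  by (simp add: loc_stable_hp_map_extinction loc_stable_hp_map_disease_free
      loc_unstable_hp_map_infected_only)

end
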